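(* Let $\mathbf{p}=(p_1,p_2,p_3,p_4)$ with all $p_i>0$, and let $\mathcal{T}_4(\mathbf{p})$ be the tessellation of $\mathbb{R}^4$ constructed below. Then there is no simplex $K\in\mathcal{T}_4(\mathbf{p})$ having an edge whose direction vector is $\pm p_1e_1\pm p_2e_2\pm 2p_3e_3\pm 3p_4e_4$ for any choice of the signs, where $e_1,\dots,e_4$ is the standard basis of $\mathbb{R}^4$. (Equivalently, the vector $(1,1,2,3)$ is not realized as an edge pattern $(|v_1|/p_1,\dots,|v_4|/p_4)$ of an edge $v$ of an element of $\mathcal{T}_4(\mathbf{p})$.)
   Context: Construction of $\mathcal{T}_d(\mathbf{p})$ for $d=4$: inductively for $m=1,\dots,4$ define a collection $\mathcal{T}_m$ of $m$-simplices in $\mathbb{R}^m$ with a vertex coloring $c_m$ with colors in $\{0,\dots,m\}$. For $m=1$: vertices $A_z=zp_1$ ($z\in\mathbb{Z}$), simplices the segments between $zp_1$ and $(z+1)p_1$, $c_1(A_z)=z\bmod 2$. For $2\le m\le 4$: for each $K\in\mathcal{T}_{m-1}$ label its vertices $A_0,\dots,A_{m-1}$ so that $c_{m-1}(A_i)=i$, set $B^K_j=(A_{j\bmod m},jp_m)\in\mathbb{R}^m$ for $j\in\mathbb{Z}$, and $L^{K,z}=\operatorname{conv}\{B^K_z,\dots,B^K_{z+m}\}$ for $z\in\mathbb{Z}$; $\mathcal{T}_m=\{L^{K,z}\}$, with vertices $(A,jp_m)$ ($A$ a vertex of $\mathcal{T}_{m-1}$, $j\equiv c_{m-1}(A)\pmod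 m$) colored $c_m((A,jp_m))=j\bmod(m+1)$. Then $\mathcal{T}_4(\mathbf{p})=\mathcal{T}_4$. An edge of a simplex is the segment between two of its vertices; its direction vector is the difference of these vertices. *)

theory Defs
  imports Main "HOL.Real"
begin

(* A point of R^m is a real list of length m.  A simplex of T_m is represented
   by the list of its m+1 vertices, where the vertex at position c is the
   (unique) vertex of colour c (colour c_m). *)

definition seg1 :: "(nat \<Rightarrow> real) \<Rightarrow> int \<Rightarrow> real list list" where
  "seg1 p z = (if even z then [[of_int z * p 1], [of_int (z + 1) * p 1]]
                          else [[of_int (z + 1) * p 1], [of_int z * p 1]])"

definition Bvert :: "(nat \<Rightarrow> real) \<Rightarrow> nat \<Rightarrow> real list list \<Rightarrow> int \<Rightarrow> real list" where
  "Bvert p m K j = K ! nat (j mod int m) @ [of_int j * p m]"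

(* L^{K,z} = conv{B_z,...,B_{z+m}}, listed by colour c_m(B_j) = j mod (m+1) *)
definition liftL :: "(nat \<Rightarrow> real) \<Rightarrow> nat \<Rightarrow> real list list \<Rightarrow> int \<Rightarrow> real list list" where
  "liftL p m K z = map (\<lambda>c. Bvert p m K (z + (int c - z) mod int (m + 1))) [0..<m + 1]"

fun tess :: "(nat \<Rightarrow> real) \<Rightarrow> nat \<Rightarrow> real list list set" where
  "tess p 0 = {}"
| "tess p (Suc 0) = {seg1 p z | z. True}"
| "tess p (Suc (Suc n)) = {liftL p (Suc (Suc n)) K z | K z. K \<in> tess p (Suc n)}"

definition edge_dir :: "real list \<Rightarrow> real list \<Rightarrow> real list" where
  "edge_dir u v = map2 (-) v u"

end

theory Submission
  imports Defs
begin

text \<open>The vertex of colour \<open>c\<close> of a simplex of \<open>T\<^sub>m\<close> lies at height \<open>j p\<^sub>m\<close> with \<open>j \<equiv> c (mod m+1)\<close>,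
  and that vertex of \<open>L\<^sup>K\<^sup>,\<^sup>z\<close> lies above the vertex of colour \<open>j mod m\<close> of \<open>K\<close>.  Two levels of
  consecutive coordinates of a vertex of \<open>T\<^sub>4\<close> are therefore congruent mod 4, whereas an edge with
  pattern \<open>(1,1,2,3)\<close> would change them by \<open>\<plusminus>2\<close> and \<open>\<plusminus>3\<close>.\<close>

lemma liftL_nth:
  "c \<le> m \<Longrightarrow> liftL p m K z ! c = Bvert p m K (z + (int c - z) mod int (m + 1))"
  unfolding liftL_def by (simp del: upt_Suc)

lemma tess_vertex_colour:
  assumes "0 < m" "K \<in> tess p m" "c \<le> m"
  shows "\<exists>x j. K ! c = x @ [of_int j * p m] \<and> length x = m - 1 \<and> j mod int (m + 1) = int c"
  using assms
proof (induction m arbitrary: K c rule: nat_induct_non_zero)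
  case 1
  then obtain z where "K = seg1 p z" by auto
  define j where "j = (if even z \<longleftrightarrow> c = 0 then z else z + 1)"
  have c: "c = 0 \<or> c = 1" using \<open>c \<le> 1\<close> by auto
  have "K ! c = [of_int j * p 1]"
    using c unfolding \<open>K = seg1 p z\<close> seg1_def j_def by auto
  moreover have "j mod 2 = int c"
    using c unfolding j_def by presburger
  ultimately show ?case by auto
next
  case (Suc m)
  have "tess p (Suc m) = {liftL p (Suc m) L z | L z. L \<in> tess p m}"
    using \<open>0 < m\<close> by (cases m) simp_all
  then obtain L z where K: "K = liftL p (Suc m) L z" and L: "L \<in> tess p m"
    using \<open>K \<in> tess p (Suc m)\<close> by blast
  define j where "j = z + (int c - z) mod int (Suc m + 1)"
  have "j mod int (Suc m + 1) = int c"
    using \<open>c \<le> Suc m\<close> unfolding j_def by (simp add: mod_add_right_eq)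
  moreover have "nat (j mod int (Suc m)) \<le> m"
    using pos_mod_bound[of "int (Suc m)" j] unfolding nat_le_iff by linarith
  then obtain x i where "L ! nat (j mod int (Suc m)) = x @ [of_int i * p m]" "length x = m - 1"
    using Suc.IH[OF L] by blast
  moreover have "K ! c = L ! nat (j mod int (Suc m)) @ [of_int j * p (Suc m)]"
    using \<open>c \<le> Suc m\<close> unfolding K j_def by (simp add: liftL_nth Bvert_def)
  ultimately show ?case
    using \<open>0 < m\<close> by (intro exI[of _ "x @ [of_int i * p m]"] exI[of _ j]) simp
qed

lemma tess_vertex_levels_cong:
  assumes "0 < m" "K \<in> tess p (m + 2)" "c \<le> m + 2"
  shows "\<exists>x i j. K ! c = x @ [of_int i * p (m + 1), of_int j * p (m + 2)] \<and> length x = m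
           \<and> i mod int (m + 2) = j mod int (m + 2)"
proof -
  obtain L z where K: "K = liftL p (m + 2) L z" and L: "L \<in> tess p (m + 1)"
    using assms(2) by (auto simp: numeral_2_eq_2)
  define j where "j = z + (int c - z) mod int (m + 2 + 1)"
  have "nat (j mod int (m + 2)) \<le> m + 1"
    using pos_mod_bound[of "int (m + 2)" j] unfolding nat_le_iff by linarith
  then obtain x i where "L ! nat (j mod int (m + 2)) = x @ [of_int i * p (m + 1)]" "length x = m"
    and "i mod int (m + 2) = j mod int (m + 2)"
    using tess_vertex_colour[OF _ L] by fastforce
  moreover have "K ! c = L ! nat (j mod int (m + 2)) @ [of_int j * p (m + 2)]"
    using assms(3) unfolding K j_def by (simp add: liftL_nth Bvert_def)
  ultimately show ?thesis by auto
qed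

lemma edge_dir_append:
  "length x = length y \<Longrightarrow> edge_dir (x @ u) (y @ v) = edge_dir x y @ edge_dir u v"
  by (simp add: edge_dir_def)

lemma level_difference_sign:
  fixes q s :: real
  assumes "of_int b * q - of_int a * q = s * of_int n * q" "q > 0" "s \<in> {-1, 1}"
  shows "b - a = n \<or> b - a = - n"
proof -
  have "of_int (b - a) = s * of_int n"
    using assms(1,2) by (simp add: left_diff_distrib[symmetric])
  then show ?thesis using assms(3) by auto
qed

lemma tess4_edge_dir_neq:
  assumes "K \<in> tess p 4" "i \<le> 4" "j \<le> 4" "p 3 > 0" "p 4 > 0" "s3 \<in> {-1, 1}" "s4 \<in> {-1, 1}"
  shows "edge_dir (K ! i) (K ! j) \<noteq> [u1, u2, s3 * 2 * p 3, s4 * 3 * p 4]"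
proof
  assume e: "edge_dir (K ! i) (K ! j) = [u1, u2, s3 * 2 * p 3, s4 * 3 * p 4]"
  have K: "K \<in> tess p (2 + 2)" and ij: "i \<le> 2 + 2" "j \<le> 2 + 2" using assms(1-3) by simp_all
  obtain x a' a where A: "K ! i = x @ [of_int a' * p 3, of_int a * p 4]" "length x = 2"
    "a' mod 4 = a mod 4"
    using tess_vertex_levels_cong[OF _ K ij(1)] by auto
  obtain y b' b where B: "K ! j = y @ [of_int b' * p 3, of_int b * p 4]" "length y = 2"
    "b' mod 4 = b mod 4"
    using tess_vertex_levels_cong[OF _ K ij(2)] by auto
  have "edge_dir x y @ [of_int b' * p 3 - of_int a' * p 3, of_int b * p 4 - of_int a * p 4]
      = [u1, u2, s3 * 2 * p 3, s4 * 3 * p 4]"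
    using e A(1,2) B(1,2) by (simp add: edge_dir_append) (simp add: edge_dir_def)
  moreover have "length (edge_dir x y) = 2" using A B by (simp add: edge_dir_def)
  ultimately have "[of_int b' * p 3 - of_int a' * p 3, of_int b * p 4 - of_int a * p 4]
      = drop 2 [u1, u2, s3 * 2 * p 3, s4 * 3 * p 4]"
    by (metis append_eq_conv_conj)
  then have d3: "of_int b' * p 3 - of_int a' * p 3 = s3 * of_int 2 * p 3"
    and d4: "of_int b * p 4 - of_int a * p 4 = s4 * of_int 3 * p 4"
    by (simp_all add: numeral_2_eq_2)
  have "b' - a' = 2 \<or> b' - a' = -2" "b - a = 3 \<or> b - a = -3"
    using level_difference_sign[OF d3] level_difference_sign[OF d4] assms(4-7) by auto
  with A(3) B(3) show False by presburger
qed

theorem lemma2: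
  fixes p :: "nat \<Rightarrow> real"
  assumes "\<forall>i\<in>{1..4}. p i > 0"
  shows "\<not> (\<exists>K \<in> tess p 4. \<exists>i<5. \<exists>j<5. i \<noteq> j \<and>
            (\<exists>s1 s2 s3 s4 :: real. s1 \<in> {-1, 1} \<and> s2 \<in> {-1, 1} \<and> s3 \<in> {-1, 1} \<and> s4 \<in> {-1, 1} \<and>
               edge_dir (K ! i) (K ! j) = [s1 * p 1, s2 * p 2, s3 * 2 * p 3, s4 * 3 * p 4]))"
proof -
  have "p 3 > 0" "p 4 > 0" using assms by auto
  then show ?thesis using tess4_edge_dir_neq by fastforce
qed

end
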